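(* Let $f:\mathcal{X}\to\mathcal{Y}$ be a fixed model, $\mathcal{A}:\mathcal{Y}\times\mathcal{E}\to\mathbb{R}$ an alignment function, $c\in\mathbb{R}$ a threshold, and $g:\mathcal{X}\to\mathbb{R}$ a fixed alignment predictor (e.g. fitted on a training set disjoint from, and independent of, the calibration and test data) with $\sup_{x}|g(x)|\le \bar M$ for some $\bar M>0$. Let $Z_i=(X_i,E_i)$, $i\in\mathcal{D}_{\mathrm{cal}}\cup\{n+1,\dots,n+m\}$, be calibration and test units, with $A_i=\mathcal{A}(f(X_i),E_i)$ and $\hat A_i=g(X_i)$. Suppose that for every $j\in[m]$, the collection $\{Z_{n+j}\}\cup\{Z_i\}_{i\in\mathcal{D}_{\mathrm{cal}}}$ is exchangeable conditional on $\{Z_{n+\ell}\}_{\ell\ne j}$ (i.e. its conditional joint law given $\{Z_{n+\ell}\}_{\ell\neq j}$ is invariant under every permutation of these units), and that the values $\{\hat A_i\}_{i\in\mathcal{D}_{\mathrm{cal}}\cup\{n+1,\dots,n+m\}}$ have no ties almost surely. Then for every $\alpha\in(0,1)$, the selection set $\mathcal{S}$ output by Conformal Alignment (defined in the context) satisfies $$\mathrm{FDR}=\mathbb{E}\Big[\frac{\sum_{j=1}^m \mathbf{1}\{A_{n+j}\le c,\ j\in\mathcal{S}\}}{\max(|\mathcal{S}|,1)}\Big]\le \alpha .$$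
   Context: Conformal Alignment: given calibration indices $\mathcal{D}_{\mathrm{cal}}$ (with observed $A_i$) and test indices $n+1,\dots,n+m$ (where $A_{n+j}$ is unobserved), define for each $j\in[m]$ the conformal p-value $$p_j=\frac{1+\sum_{i\in\mathcal{D}_{\mathrm{cal}}}\mathbf{1}\{A_i\le c,\ \hat A_i\ge \hat A_{n+j}\}}{|\mathcal{D}_{\mathrm{cal}}|+1}.$$ Let $p_{(1)}\le\dots\le p_{(m)}$ be the ordered p-values, $k^*=\max\{k\in[m]: p_{(k)}\le \alpha k/m\}$ (with $\max\emptyset=0$), and $\mathcal{S}=\{j\in[m]: p_j\le \alpha k^*/m\}$ (the Benjamini–Hochberg rejection set at level $\alpha$). The expectation in FDR is over the randomness of calibration and test data. *)

theory Defs
  imports "HOL-Probability.Probability" "HOL-Combinatorics.Permutations"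
begin

definition conf_pval ::
  "nat set \<Rightarrow> nat \<Rightarrow> real \<Rightarrow> (nat \<Rightarrow> real) \<Rightarrow> (nat \<Rightarrow> real) \<Rightarrow> nat \<Rightarrow> real" where
  "conf_pval Dcal n c A Ahat j =
     (1 + real (card {i \<in> Dcal. A i \<le> c \<and> Ahat i \<ge> Ahat (n + j)})) / (real (card Dcal) + 1)"

definition ord_pval :: "nat \<Rightarrow> (nat \<Rightarrow> real) \<Rightarrow> nat \<Rightarrow> real" where
  "ord_pval m p k = sort (map p [1..<m+1]) ! (k - 1)"

definition BH_kstar :: "real \<Rightarrow> nat \<Rightarrow> (nat \<Rightarrow> real) \<Rightarrow> nat" where
  "BH_kstar \<alpha> m p = Max ({k \<in> {1..m}. ord_pval m p k \<le> \<alpha> * real k / real m} \<union> {0})"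

definition BH_set :: "real \<Rightarrow> nat \<Rightarrow> (nat \<Rightarrow> real) \<Rightarrow> nat set" where
  "BH_set \<alpha> m p = {j \<in> {1..m}. p j \<le> \<alpha> * real (BH_kstar \<alpha> m p) / real m}"

definition CA_sel ::
  "real \<Rightarrow> nat set \<Rightarrow> nat \<Rightarrow> nat \<Rightarrow> real \<Rightarrow> (nat \<Rightarrow> real) \<Rightarrow> (nat \<Rightarrow> real) \<Rightarrow> nat set" where
  "CA_sel \<alpha> Dcal n m c A Ahat = BH_set \<alpha> m (conf_pval Dcal n c A Ahat)"

end

theory Submission
  imports Defs
begin

text \<open>Fix a test unit \<open>j\<close> that is a null (\<open>A (n + j) \<le> c\<close>) and is rejected. Setting \<open>p j\<close> to
  \<open>0\<close> and recomputing the other p-values with \<open>n + j\<close> added to the calibration set lowers only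
  p-values of rejected hypotheses, so BH run on these leave-one-out p-values has the same \<open>k*\<close>.
  Hence the FDP contribution of \<open>j\<close> is at most the indicator of \<open>p j \<le> \<alpha> k* / m\<close> divided by
  \<open>k*\<close>, and now \<open>k*\<close> is invariant under swapping \<open>n + j\<close> with a calibration unit. Up to the
  factor \<open>|Dcal| + 1\<close>, \<open>p j\<close> is the rank of the score of \<open>n + j\<close> among the null units of
  \<open>Dcal \<union> {n + j}\<close>; without ties at most \<open>\<alpha> k* (|Dcal| + 1) / m\<close> of them have rank that
  small. Averaging over the \<open>|Dcal| + 1\<close> swaps, which preserve the law by exchangeability, bounds
  the expected contribution of \<open>j\<close> by \<open>\<alpha> / m\<close>; summing over \<open>j\<close> gives \<open>FDR \<le> \<alpha>\<close>.\<close>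

section \<open>The Benjamini--Hochberg threshold\<close>

definition count_pvals_le :: "nat \<Rightarrow> (nat \<Rightarrow> real) \<Rightarrow> real \<Rightarrow> nat" where
  "count_pvals_le m p x = card {l \<in> {1..m}. p l \<le> x}"

lemma sorted_nth_le_iff:
  fixes xs :: "real list"
  assumes "sorted xs" "1 \<le> k" "k \<le> length xs"
  shows "xs ! (k - 1) \<le> x \<longleftrightarrow> k \<le> length (filter (\<lambda>y. y \<le> x) xs)"
proof -
  have len: "length (filter (\<lambda>y. y \<le> x) xs) = card {i. i < length xs \<and> xs ! i \<le> x}"
    by (rule length_filter_conv_card)
  show ?thesis
  proof
    assume kth: "xs ! (k - 1) \<le> x"
    have "{0..<k} \<subseteq> {i. i < length xs \<and> xs ! i \<le> x}"
    proof
      fix i assume "i \<in> {0..<k}"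
      then have "i \<le> k - 1" "k - 1 < length xs" "i < length xs" using assms by auto
      then have "xs ! i \<le> xs ! (k - 1)" using sorted_nth_mono[OF assms(1)] by blast
      then show "i \<in> {i. i < length xs \<and> xs ! i \<le> x}" using kth \<open>i < length xs\<close> by auto
    qed
    from card_mono[OF _ this] show "k \<le> length (filter (\<lambda>y. y \<le> x) xs)" unfolding len by simp
  next
    assume k: "k \<le> length (filter (\<lambda>y. y \<le> x) xs)"
    show "xs ! (k - 1) \<le> x"
    proof (rule ccontr)
      assume gt: "\<not> xs ! (k - 1) \<le> x"
      have "{i. i < length xs \<and> xs ! i \<le> x} \<subseteq> {0..<k - 1}"
      proof
        fix i assume i: "i \<in> {i. i < length xs \<and> xs ! i \<le> x}"
        show "i \<in> {0..<k - 1}"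
        proof (rule ccontr)
          assume "i \<notin> {0..<k - 1}"
          then have "k - 1 \<le> i" by simp
          then have "xs ! (k - 1) \<le> xs ! i" using i sorted_nth_mono[OF assms(1)] by blast
          then show False using i gt by auto
        qed
      qed
      from card_mono[OF _ this] k show False unfolding len using assms by simp
    qed
  qed
qed

lemma count_pvals_le_eq_length_filter:
  "count_pvals_le m p x = length (filter (\<lambda>y. y \<le> x) (sort (map p [1..<m+1])))"
proof -
  have "length (filter (\<lambda>y. y \<le> x) (sort (map p [1..<m+1])))
      = length (filter (\<lambda>y. y \<le> x) (map p [1..<m+1]))"
    by (rule mset_eq_length) (simp add: mset_filter)
  also have "\<dots> = length (filter (\<lambda>l. p l \<le> x) [1..<m+1])"
    by (simp add: filter_map comp_def)
  also have "\<dots> = card (set (filter (\<lambda>l. p l \<le> x) [1..<m+1]))"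
    by (rule distinct_card[symmetric]) simp
  also have "set (filter (\<lambda>l. p l \<le> x) [1..<m+1]) = {l \<in> {1..m}. p l \<le> x}" by auto
  finally show ?thesis unfolding count_pvals_le_def by simp
qed

lemma ord_pval_le_iff:
  assumes "1 \<le> k" "k \<le> m"
  shows "ord_pval m p k \<le> x \<longleftrightarrow> k \<le> count_pvals_le m p x"
  unfolding ord_pval_def count_pvals_le_eq_length_filter
  by (rule sorted_nth_le_iff) (use assms in auto)

lemma BH_kstar_eq_Max_count:
  "BH_kstar \<alpha> m p = Max ({k \<in> {1..m}. k \<le> count_pvals_le m p (\<alpha> * real k / real m)} \<union> {0})"
  unfolding BH_kstar_def using ord_pval_le_iff by (metis (lifting) atLeastAtMost_iff)

lemma card_BH_set: "card (BH_set \<alpha> m p) = count_pvals_le m p (\<alpha> * real (BH_kstar \<alpha> m p) / real m)"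
  unfolding BH_set_def count_pvals_le_def by simp

lemma BH_kstar_le_card_BH_set: "BH_kstar \<alpha> m p \<le> card (BH_set \<alpha> m p)"
proof -
  let ?K = "{k \<in> {1..m}. k \<le> count_pvals_le m p (\<alpha> * real k / real m)} \<union> {0}"
  have "BH_kstar \<alpha> m p \<in> ?K" unfolding BH_kstar_eq_Max_count by (intro Max_in) auto
  then show ?thesis unfolding card_BH_set by auto
qed

lemma BH_kstar_cong:
  assumes "\<And>l. l \<in> {1..m} \<Longrightarrow> p l = q l"
  shows "BH_kstar \<alpha> m p = BH_kstar \<alpha> m q"
proof -
  have "count_pvals_le m p = count_pvals_le m q"
    unfolding count_pvals_le_def using assms by (intro ext arg_cong[where f = card]) auto
  then show ?thesis unfolding BH_kstar_eq_Max_count by simp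
qed

lemma BH_set_cong:
  assumes "\<And>l. l \<in> {1..m} \<Longrightarrow> p l = q l"
  shows "BH_set \<alpha> m p = BH_set \<alpha> m q"
  unfolding BH_set_def using BH_kstar_cong[OF assms] assms by auto

lemma BH_kstar_lowering_rejected:
  assumes "0 \<le> \<alpha>"
    and le: "\<And>l. l \<in> {1..m} \<Longrightarrow> q l \<le> p l"
    and rejected: "\<And>l. l \<in> {1..m} \<Longrightarrow> q l \<noteq> p l \<Longrightarrow> p l \<le> \<alpha> * real (BH_kstar \<alpha> m p) / real m"
  shows "BH_kstar \<alpha> m q = BH_kstar \<alpha> m p"
proof -
  define K where "K = BH_kstar \<alpha> m p"
  have same_below: "(q l \<le> \<alpha> * real k / real m) = (p l \<le> \<alpha> * real k / real m)"
    if "K \<le> k" "l \<in> {1..m}" for k l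
  proof -
    have "\<alpha> * real K / real m \<le> \<alpha> * real k / real m"
      using \<open>0 \<le> \<alpha>\<close> that(1) by (intro divide_right_mono mult_left_mono) auto
    then show ?thesis
      using le[OF that(2)] rejected[OF that(2)] unfolding K_def[symmetric] by (cases "q l = p l") auto
  qed
  have count_eq: "count_pvals_le m q (\<alpha> * real k / real m) = count_pvals_le m p (\<alpha> * real k / real m)"
    if "K \<le> k" for k
    unfolding count_pvals_le_def using same_below[OF that] by (intro arg_cong[where f = card]) auto
  have count_ge: "count_pvals_le m p x \<le> count_pvals_le m q x" for x
    unfolding count_pvals_le_def using le by (intro card_mono) (auto intro: order_trans)
  let ?Kp = "{k \<in> {1..m}. k \<le> count_pvals_le m p (\<alpha> * real k / real m)} \<union> {0}"
  let ?Kq = "{k \<in> {1..m}. k \<le> count_pvals_le m q (\<alpha> * real k / real m)} \<union> {0}"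
  have K_in: "K \<in> ?Kp" unfolding K_def BH_kstar_eq_Max_count by (intro Max_in) auto
  have K_max: "k \<le> K" if "k \<in> ?Kp" for k
    unfolding K_def BH_kstar_eq_Max_count using that by (intro Max_ge) auto
  have "Max ?Kq = K"
  proof (rule Max_eqI)
    show "K \<in> ?Kq" using K_in count_ge[of "\<alpha> * real K / real m"] by auto
  next
    fix k assume k: "k \<in> ?Kq"
    show "k \<le> K"
    proof (rule ccontr)
      assume "\<not> k \<le> K"
      then have "k \<in> ?Kp" using k count_eq[of k] by auto
      then show False using K_max \<open>\<not> k \<le> K\<close> by blast
    qed
  qed simp
  then show ?thesis unfolding BH_kstar_eq_Max_count K_def .
qed

section \<open>Ranks\<close>

lemma card_upper_set_less:
  fixes V :: "'a \<Rightarrow> 'b::linorder"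
  assumes "finite B" "u \<in> B" "V u < V w"
  shows "card {v \<in> B. V w \<le> V v} < card {v \<in> B. V u \<le> V v}"
proof (rule psubset_card_mono)
  have "{v \<in> B. V w \<le> V v} \<subseteq> {v \<in> B. V u \<le> V v}" using assms(3) by auto
  moreover have "u \<in> {v \<in> B. V u \<le> V v}" "u \<notin> {v \<in> B. V w \<le> V v}" using assms(2,3) by auto
  ultimately show "{v \<in> B. V w \<le> V v} \<subset> {v \<in> B. V u \<le> V v}" by blast
qed (use assms(1) in simp)

lemma inj_on_card_upper_set:
  fixes V :: "'a \<Rightarrow> 'b::linorder"
  assumes "finite B" "inj_on V B"
  shows "inj_on (\<lambda>u. card {v \<in> B. V u \<le> V v}) B"
proof (rule inj_onI)
  fix u w
  assume u: "u \<in> B" and w: "w \<in> B" and eq: "card {v \<in> B. V u \<le> V v} = card {v \<in> B. V w \<le> V v}"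
  show "u = w"
  proof (rule ccontr)
    assume "u \<noteq> w"
    then have "V u \<noteq> V w" using assms(2) u w by (auto dest: inj_onD)
    then have "V u < V w \<or> V w < V u" by (simp add: linorder_neq_iff)
    then show False
      using card_upper_set_less[OF assms(1) u, of V w] card_upper_set_less[OF assms(1) w, of V u] eq
      by auto
  qed
qed

lemma card_upper_rank_le:
  fixes V :: "'a \<Rightarrow> 'b::linorder"
  assumes "finite B" "inj_on V B" "0 \<le> T"
  shows "real (card {u \<in> B. real (card {v \<in> B. V u \<le> V v}) \<le> T}) \<le> T"
proof -
  let ?rank = "\<lambda>u. card {v \<in> B. V u \<le> V v}"
  let ?S = "{u \<in> B. real (?rank u) \<le> T}"
  have "?rank ` ?S \<subseteq> {1..nat \<lfloor>T\<rfloor>}"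
  proof
    fix r assume "r \<in> ?rank ` ?S"
    then obtain u where u: "u \<in> B" "real (?rank u) \<le> T" "r = ?rank u" by auto
    have "u \<in> {v \<in> B. V u \<le> V v}" using u(1) by simp
    then have "0 < ?rank u" using assms(1) by (subst card_gt_0_iff) auto
    moreover have "?rank u \<le> nat \<lfloor>T\<rfloor>" using u(2) by (simp add: le_nat_floor)
    ultimately show "r \<in> {1..nat \<lfloor>T\<rfloor>}" using u(3) by auto
  qed
  from card_mono[OF finite_atLeastAtMost this] have "card (?rank ` ?S) \<le> nat \<lfloor>T\<rfloor>" by simp
  moreover have "card (?rank ` ?S) = card ?S"
    by (rule card_image, rule inj_on_subset[OF inj_on_card_upper_set[OF assms(1,2)]]) auto
  ultimately have "real (card ?S) \<le> real (nat \<lfloor>T\<rfloor>)" by simp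
  also have "\<dots> \<le> T" using assms(3) by linarith
  finally show ?thesis .
qed

lemma card_Collect_transpose:
  assumes "a \<in> U" "b \<in> U"
  shows "card {i \<in> U. P (Transposition.transpose a b i)} = card {i \<in> U. P i}"
proof -
  let ?\<sigma> = "Transposition.transpose a b"
  have \<sigma>_in: "?\<sigma> i \<in> U" if "i \<in> U" for i
    using assms that by (auto simp: Transposition.transpose_def)
  have "?\<sigma> ` {i \<in> U. P (?\<sigma> i)} = {i \<in> U. P i}"
  proof
    show "?\<sigma> ` {i \<in> U. P (?\<sigma> i)} \<subseteq> {i \<in> U. P i}" using \<sigma>_in by auto
    show "{i \<in> U. P i} \<subseteq> ?\<sigma> ` {i \<in> U. P (?\<sigma> i)}"
    proof
      fix i assume "i \<in> {i \<in> U. P i}"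
      then have "?\<sigma> i \<in> {i \<in> U. P (?\<sigma> i)}" using \<sigma>_in by auto
      then show "i \<in> ?\<sigma> ` {i \<in> U. P (?\<sigma> i)}" by (rule rev_image_eqI) simp
    qed
  qed
  moreover have "inj_on ?\<sigma> {i \<in> U. P (?\<sigma> i)}" by simp
  ultimately show ?thesis by (metis card_image)
qed

section \<open>Summaries of a sample\<close>

text \<open>A sample enters Conformal Alignment only through its null units (\<open>A i \<le> c\<close>) and the order
  of its predicted scores. This finite summary keeps every function of the sample measurable.\<close>
type_synonym summary = "nat set \<times> (nat \<times> nat) set"

definition score_order :: "nat set \<Rightarrow> (nat \<Rightarrow> real) \<Rightarrow> (nat \<times> nat) set" where
  "score_order I V = {(a, b) \<in> I \<times> I. V a \<le> V b}"

definition summary_pval :: "nat set \<Rightarrow> nat \<Rightarrow> summary \<Rightarrow> nat \<Rightarrow> real" where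
  "summary_pval Dcal n d j =
     (1 + real (card {i \<in> Dcal. i \<in> fst d \<and> (n + j, i) \<in> snd d})) / (real (card Dcal) + 1)"

definition fdp_term :: "real \<Rightarrow> nat set \<Rightarrow> nat \<Rightarrow> nat \<Rightarrow> summary \<Rightarrow> nat \<Rightarrow> real" where
  "fdp_term \<alpha> Dcal n m d j =
     (let S = BH_set \<alpha> m (summary_pval Dcal n d)
      in of_bool (n + j \<in> fst d \<and> j \<in> S) / real (max (card S) 1))"

text \<open>Leave-one-out p-values: unit \<open>n + j\<close> joins the calibration set and its own p-value is
  set to \<open>0\<close>. They do not change when \<open>n + j\<close> is swapped with a calibration unit.\<close>
definition loo_pval :: "nat set \<Rightarrow> nat \<Rightarrow> nat \<Rightarrow> summary \<Rightarrow> nat \<Rightarrow> real" where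
  "loo_pval Dcal n j d l = (if l = j then 0 else
     real (card {i \<in> Dcal \<union> {n + j}. i \<in> fst d \<and> (n + l, i) \<in> snd d}) / (real (card Dcal) + 1))"

text \<open>For \<open>K = 0\<close> this is \<open>0\<close>, since \<open>x / 0 = 0\<close>.\<close>
definition fdp_bound :: "real \<Rightarrow> nat set \<Rightarrow> nat \<Rightarrow> nat \<Rightarrow> summary \<Rightarrow> nat \<Rightarrow> real" where
  "fdp_bound \<alpha> Dcal n m d j =
     (let K = BH_kstar \<alpha> m (loo_pval Dcal n j d)
      in of_bool (n + j \<in> fst d \<and> summary_pval Dcal n d j \<le> \<alpha> * real K / real m) / real K)"

lemma summary_pval_pos: "0 < summary_pval Dcal n d j"
  unfolding summary_pval_def by (intro divide_pos_pos) auto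

context
  fixes Dcal :: "nat set" and n m :: nat and I :: "nat set"
  assumes Dcal_fin: "finite Dcal"
    and Dcal_disj: "Dcal \<inter> {n+1..n+m} = {}"
    and units_sub: "Dcal \<union> {n+1..n+m} \<subseteq> I"
begin

lemma summary_pval_score_order:
  assumes "l \<in> {1..m}"
  shows "summary_pval Dcal n (Nset, score_order I V) l
       = (1 + real (card {i \<in> Dcal. i \<in> Nset \<and> V (n + l) \<le> V i})) / (real (card Dcal) + 1)"
proof -
  have "{i \<in> Dcal. i \<in> Nset \<and> (n + l, i) \<in> score_order I V} = {i \<in> Dcal. i \<in> Nset \<and> V (n + l) \<le> V i}"
    using assms units_sub unfolding score_order_def by auto
  then show ?thesis unfolding summary_pval_def by simp
qed

lemma loo_pval_score_order:
  assumes "l \<in> {1..m}" "j \<in> {1..m}" "l \<noteq> j"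
  shows "loo_pval Dcal n j (Nset, score_order I V) l
       = (real (card {i \<in> Dcal. i \<in> Nset \<and> V (n + l) \<le> V i})
          + of_bool (n + j \<in> Nset \<and> V (n + l) \<le> V (n + j))) / (real (card Dcal) + 1)"
proof -
  let ?C = "{i \<in> Dcal. i \<in> Nset \<and> V (n + l) \<le> V i}"
  have "n + j \<notin> Dcal" using assms(2) Dcal_disj by auto
  moreover have "{i \<in> Dcal \<union> {n + j}. i \<in> Nset \<and> (n + l, i) \<in> score_order I V}
      = ?C \<union> (if n + j \<in> Nset \<and> V (n + l) \<le> V (n + j) then {n + j} else {})"
    using assms units_sub unfolding score_order_def by auto
  ultimately show ?thesis unfolding loo_pval_def using assms(3) Dcal_fin by auto
qed

lemma loo_pval_le_summary_pval:
  fixes Nset :: "nat set" and V :: "nat \<Rightarrow> real"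
  assumes l: "l \<in> {1..m}" and j: "j \<in> {1..m}" "l \<noteq> j" and null: "n + j \<in> Nset"
  defines "p \<equiv> summary_pval Dcal n (Nset, score_order I V)"
  shows "loo_pval Dcal n j (Nset, score_order I V) l \<le> p l"
    and "loo_pval Dcal n j (Nset, score_order I V) l \<noteq> p l \<Longrightarrow> p l \<le> p j"
proof -
  let ?C = "\<lambda>k. card {i \<in> Dcal. i \<in> Nset \<and> V (n + k) \<le> V i}"
  have p: "p k = (1 + real (?C k)) / (real (card Dcal) + 1)" if "k \<in> {1..m}" for k
    unfolding p_def using summary_pval_score_order[OF that] .
  have q: "loo_pval Dcal n j (Nset, score_order I V) l
         = (real (?C l) + of_bool (V (n + l) \<le> V (n + j))) / (real (card Dcal) + 1)"
    using loo_pval_score_order[OF l j] null by simp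
  show "loo_pval Dcal n j (Nset, score_order I V) l \<le> p l"
    unfolding q p[OF l] by (intro divide_right_mono) auto
  assume "loo_pval Dcal n j (Nset, score_order I V) l \<noteq> p l"
  then have "V (n + j) < V (n + l)" unfolding q p[OF l] by (cases "V (n + l) \<le> V (n + j)") auto
  then have "?C l \<le> ?C j" using Dcal_fin by (intro card_mono) auto
  then show "p l \<le> p j" unfolding p[OF l] p[OF j(1)] by (intro divide_right_mono) auto
qed

lemma BH_kstar_loo_pval:
  fixes Nset :: "nat set" and V :: "nat \<Rightarrow> real"
  assumes "0 \<le> \<alpha>" and j: "j \<in> {1..m}" and null: "n + j \<in> Nset"
  defines "p \<equiv> summary_pval Dcal n (Nset, score_order I V)"
    and "q \<equiv> loo_pval Dcal n j (Nset, score_order I V)"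
  assumes rej: "p j \<le> \<alpha> * real (BH_kstar \<alpha> m p) / real m"
  shows "BH_kstar \<alpha> m q = BH_kstar \<alpha> m p"
proof -
  note loo_le = loo_pval_le_summary_pval[where V = V, OF _ j _ null, folded p_def q_def]
  have "0 < p j" unfolding p_def by (rule summary_pval_pos)
  txt \<open>Pass from \<open>p\<close> to \<open>q\<close> in two steps, each lowering only rejected p-values: first the
    other units' p-values, then \<open>p j\<close> itself.\<close>
  have step: "BH_kstar \<alpha> m (q(j := p j)) = BH_kstar \<alpha> m p"
  proof (rule BH_kstar_lowering_rejected[OF \<open>0 \<le> \<alpha>\<close>])
    fix l assume l: "l \<in> {1..m}"
    show "(q(j := p j)) l \<le> p l" using loo_le(1)[OF l] by (cases "l = j") auto
    assume "(q(j := p j)) l \<noteq> p l"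
    then have "p l \<le> p j" using loo_le(2)[OF l] by (cases "l = j") auto
    then show "p l \<le> \<alpha> * real (BH_kstar \<alpha> m p) / real m" using rej by linarith
  qed
  show ?thesis
    unfolding step[symmetric]
  proof (rule BH_kstar_lowering_rejected[OF \<open>0 \<le> \<alpha>\<close>])
    fix l assume "l \<in> {1..m}"
    show "q l \<le> (q(j := p j)) l" using \<open>0 < p j\<close> by (cases "l = j") (auto simp: q_def loo_pval_def)
    assume "q l \<noteq> (q(j := p j)) l"
    then show "(q(j := p j)) l \<le> \<alpha> * real (BH_kstar \<alpha> m (q(j := p j))) / real m"
      using rej step by (cases "l = j") auto
  qed
qed

lemma fdp_term_le_fdp_bound:
  fixes Nset :: "nat set" and V :: "nat \<Rightarrow> real"
  assumes "0 \<le> \<alpha>" and j: "j \<in> {1..m}"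
  defines "d \<equiv> (Nset, score_order I V)"
  shows "fdp_term \<alpha> Dcal n m d j \<le> fdp_bound \<alpha> Dcal n m d j"
proof (cases "n + j \<in> Nset \<and> j \<in> BH_set \<alpha> m (summary_pval Dcal n d)")
  case False
  then show ?thesis unfolding fdp_term_def fdp_bound_def d_def Let_def by auto
next
  case True
  define p where "p = summary_pval Dcal n d"
  define K where "K = BH_kstar \<alpha> m p"
  have null: "n + j \<in> Nset" and rej: "p j \<le> \<alpha> * real K / real m"
    using True unfolding BH_set_def p_def K_def d_def by auto
  have "BH_kstar \<alpha> m (loo_pval Dcal n j d) = K"
    using BH_kstar_loo_pval[OF \<open>0 \<le> \<alpha>\<close> j null] rej unfolding p_def K_def d_def by simp
  moreover have "0 < K" using rej summary_pval_pos[of Dcal n d j] unfolding p_def by (cases "K = 0") auto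
  moreover have "K \<le> card (BH_set \<alpha> m p)" unfolding K_def by (rule BH_kstar_le_card_BH_set)
  ultimately show ?thesis
    using True rej unfolding fdp_term_def fdp_bound_def p_def K_def d_def Let_def
    by (simp add: divide_left_mono)
qed

lemma loo_pval_transpose:
  fixes Nset :: "nat set" and V :: "nat \<Rightarrow> real"
  assumes j: "j \<in> {1..m}" and u: "u \<in> Dcal \<union> {n + j}" and l: "l \<in> {1..m}"
  defines "\<sigma> \<equiv> Transposition.transpose (n + j) u"
  shows "loo_pval Dcal n j ({i \<in> I. \<sigma> i \<in> Nset}, score_order I (V \<circ> \<sigma>)) l
       = loo_pval Dcal n j (Nset, score_order I V) l"
proof (cases "l = j")
  case True
  then show ?thesis unfolding loo_pval_def by simp
next
  case False
  let ?U = "Dcal \<union> {n + j}"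
  let ?P = "\<lambda>v. v \<in> Nset \<and> V (n + l) \<le> V v"
  have "n + l \<notin> ?U" using l j False Dcal_disj by auto
  then have "n + l \<noteq> n + j" "n + l \<noteq> u" using u by auto
  then have \<sigma>_l: "\<sigma> (n + l) = n + l" unfolding \<sigma>_def by simp
  have "?U \<subseteq> I" "n + l \<in> I" using j l units_sub by auto
  then have "{i \<in> ?U. i \<in> {i \<in> I. \<sigma> i \<in> Nset} \<and> (n + l, i) \<in> score_order I (V \<circ> \<sigma>)}
           = {i \<in> ?U. ?P (\<sigma> i)}"
    and "{i \<in> ?U. i \<in> Nset \<and> (n + l, i) \<in> score_order I V} = {i \<in> ?U. ?P i}"
    using \<sigma>_l unfolding score_order_def by auto
  moreover have "card {i \<in> ?U. ?P (\<sigma> i)} = card {i \<in> ?U. ?P i}"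
    unfolding \<sigma>_def by (rule card_Collect_transpose) (use u in auto)
  ultimately show ?thesis unfolding loo_pval_def using False by simp
qed

lemma summary_pval_transpose:
  fixes Nset :: "nat set" and V :: "nat \<Rightarrow> real"
  assumes j: "j \<in> {1..m}" and u: "u \<in> Dcal \<union> {n + j}" and null: "u \<in> Nset"
  defines "\<sigma> \<equiv> Transposition.transpose (n + j) u"
  shows "summary_pval Dcal n ({i \<in> I. \<sigma> i \<in> Nset}, score_order I (V \<circ> \<sigma>)) j
       = real (card {v \<in> Dcal \<union> {n + j}. v \<in> Nset \<and> V u \<le> V v}) / (real (card Dcal) + 1)"
proof -
  let ?U = "Dcal \<union> {n + j}"
  let ?P = "\<lambda>v. (v \<in> Nset \<and> V u \<le> V v) \<and> v \<noteq> u"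
  have "n + j \<notin> Dcal" using j Dcal_disj by auto
  then have in_Dcal: "\<sigma> i \<noteq> u \<longleftrightarrow> i \<in> Dcal" if "i \<in> ?U" for i
    using u that unfolding \<sigma>_def by (auto simp: Transposition.transpose_def)
  have "?U \<subseteq> I" "n + j \<in> I" using j units_sub by auto
  then have "{i \<in> Dcal. i \<in> {i \<in> I. \<sigma> i \<in> Nset} \<and> (n + j, i) \<in> score_order I (V \<circ> \<sigma>)}
           = {i \<in> ?U. ?P (\<sigma> i)}"
    using in_Dcal unfolding score_order_def \<sigma>_def by auto
  also have "card \<dots> = card {v \<in> ?U. ?P v}"
    unfolding \<sigma>_def by (rule card_Collect_transpose) (use u in auto)
  finally have "1 + card {i \<in> Dcal. i \<in> {i \<in> I. \<sigma> i \<in> Nset} \<and> (n + j, i) \<in> score_order I (V \<circ> \<sigma>)}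
      = card (insert u {v \<in> ?U. ?P v})"
    using Dcal_fin by simp
  also have "insert u {v \<in> ?U. ?P v} = {v \<in> ?U. v \<in> Nset \<and> V u \<le> V v}" using u null by auto
  finally show ?thesis unfolding summary_pval_def by (simp add: comp_def)
qed

lemma fdp_bound_transpose:
  fixes Nset :: "nat set" and V :: "nat \<Rightarrow> real" and \<alpha> :: real
  assumes j: "j \<in> {1..m}" and u: "u \<in> Dcal \<union> {n + j}"
  defines "\<sigma> \<equiv> Transposition.transpose (n + j) u"
    and "K \<equiv> BH_kstar \<alpha> m (loo_pval Dcal n j (Nset, score_order I V))"
  shows "fdp_bound \<alpha> Dcal n m ({i \<in> I. \<sigma> i \<in> Nset}, score_order I (V \<circ> \<sigma>)) j
       = of_bool (u \<in> Nset \<and> real (card {v \<in> Dcal \<union> {n + j}. v \<in> Nset \<and> V u \<le> V v})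
                  / (real (card Dcal) + 1) \<le> \<alpha> * real K / real m) / real K"
proof -
  have "BH_kstar \<alpha> m (loo_pval Dcal n j ({i \<in> I. \<sigma> i \<in> Nset}, score_order I (V \<circ> \<sigma>))) = K"
    unfolding K_def \<sigma>_def by (rule BH_kstar_cong) (rule loo_pval_transpose[OF j u])
  moreover have "n + j \<in> {i \<in> I. \<sigma> i \<in> Nset} \<longleftrightarrow> u \<in> Nset"
    using j units_sub unfolding \<sigma>_def by auto
  ultimately show ?thesis
    using summary_pval_transpose[OF j u] unfolding fdp_bound_def Let_def \<sigma>_def by auto
qed

lemma sum_fdp_bound_transpose_le:
  fixes Nset :: "nat set" and V :: "nat \<Rightarrow> real"
  assumes "0 \<le> \<alpha>" and j: "j \<in> {1..m}" and inj: "inj_on V (Dcal \<union> {n + j})"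
  shows "(\<Sum>u\<in>Dcal \<union> {n + j}. fdp_bound \<alpha> Dcal n m
            ({i \<in> I. Transposition.transpose (n + j) u i \<in> Nset},
             score_order I (V \<circ> Transposition.transpose (n + j) u)) j)
         \<le> \<alpha> * (real (card Dcal) + 1) / real m"
proof -
  let ?U = "Dcal \<union> {n + j}"
  let ?rank = "\<lambda>u. card {v \<in> ?U \<inter> Nset. V u \<le> V v}"
  define K where "K = BH_kstar \<alpha> m (loo_pval Dcal n j (Nset, score_order I V))"
  define N where "N = real (card Dcal) + 1"
  define T where "T = \<alpha> * real K / real m * N"
  have "N > 0" unfolding N_def by simp
  have "(\<Sum>u\<in>?U. fdp_bound \<alpha> Dcal n m
            ({i \<in> I. Transposition.transpose (n + j) u i \<in> Nset},
             score_order I (V \<circ> Transposition.transpose (n + j) u)) j)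
      = (\<Sum>u\<in>?U. of_bool (u \<in> Nset \<and> real (?rank u) \<le> T) / real K)"
  proof (rule sum.cong[OF refl])
    fix u assume u: "u \<in> ?U"
    have "{v \<in> ?U. v \<in> Nset \<and> V u \<le> V v} = {v \<in> ?U \<inter> Nset. V u \<le> V v}" by auto
    then show "fdp_bound \<alpha> Dcal n m ({i \<in> I. Transposition.transpose (n + j) u i \<in> Nset},
             score_order I (V \<circ> Transposition.transpose (n + j) u)) j
        = of_bool (u \<in> Nset \<and> real (?rank u) \<le> T) / real K"
      unfolding fdp_bound_transpose[OF j u] K_def[symmetric] N_def[symmetric] T_def
      using \<open>N > 0\<close> by (simp add: pos_divide_le_eq)
  qed
  also have "\<dots> = real (card {u \<in> ?U \<inter> Nset. real (?rank u) \<le> T}) / real K"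
  proof -
    have "?U \<inter> {u. u \<in> Nset \<and> real (?rank u) \<le> T} = {u \<in> ?U \<inter> Nset. real (?rank u) \<le> T}" by auto
    then show ?thesis using Dcal_fin by (simp add: sum_divide_distrib[symmetric])
  qed
  also have "\<dots> \<le> T / real K"
    using Dcal_fin \<open>0 \<le> \<alpha>\<close> \<open>N > 0\<close> inj_on_subset[OF inj]
    by (intro divide_right_mono card_upper_rank_le) (auto simp: T_def)
  also have "\<dots> \<le> \<alpha> * N / real m"
    using \<open>0 \<le> \<alpha>\<close> \<open>N > 0\<close> unfolding T_def by (cases "K = 0") auto
  finally show ?thesis unfolding N_def .
qed

end

lemma fdp_term_abs_le_1: "\<bar>fdp_term \<alpha> Dcal n m d j\<bar> \<le> 1"
  unfolding fdp_term_def Let_def by auto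

lemma measurable_summary:
  fixes a s :: "'a \<Rightarrow> real"
  assumes a: "a \<in> borel_measurable N" and s: "s \<in> borel_measurable N" and "finite I"
  shows "(\<lambda>z. ({i \<in> I. a (z i) \<le> c}, score_order I (\<lambda>i. s (z i))))
         \<in> measurable (PiM I (\<lambda>_. N)) (count_space (Pow I \<times> Pow (I \<times> I)))"
proof (subst measurable_count_space_eq2)
  let ?P = "PiM I (\<lambda>_. N)"
  let ?d = "\<lambda>z. ({i \<in> I. a (z i) \<le> c}, score_order I (\<lambda>i. s (z i)))"
  have comp: "(\<lambda>z. h (z i)) \<in> borel_measurable ?P" if "h \<in> borel_measurable N" "i \<in> I" for h i
    using measurable_compose[OF measurable_component_singleton[OF that(2)] that(1)] .
  show "finite (Pow I \<times> Pow (I \<times> I))" using \<open>finite I\<close> by simp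
  show "?d \<in> space ?P \<rightarrow> Pow I \<times> Pow (I \<times> I) \<and>
        (\<forall>d \<in> Pow I \<times> Pow (I \<times> I). ?d -` {d} \<inter> space ?P \<in> sets ?P)"
  proof (intro conjI ballI)
    show "?d \<in> space ?P \<rightarrow> Pow I \<times> Pow (I \<times> I)" by (auto simp: score_order_def)
    fix d assume "d \<in> Pow I \<times> Pow (I \<times> I)"
    then obtain X Y where d: "d = (X, Y)" "X \<subseteq> I" "Y \<subseteq> I \<times> I" by auto
    have preimage: "?d -` {d} \<inter> space ?P = {z \<in> space ?P. (\<forall>i\<in>I. (a (z i) \<le> c) = (i \<in> X)) \<and>
            (\<forall>x\<in>I. \<forall>y\<in>I. (s (z x) \<le> s (z y)) = ((x, y) \<in> Y))}"
      using d by (auto simp: set_eq_iff score_order_def)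
    have "Measurable.pred ?P (\<lambda>z. (a (z i) \<le> c) = (i \<in> X))" if "i \<in> I" for i
      using comp[OF a that] by measurable
    moreover have "Measurable.pred ?P (\<lambda>z. (s (z x) \<le> s (z y)) = ((x, y) \<in> Y))"
      if "x \<in> I" "y \<in> I" for x y
    proof (rule pred_intros_logic(6))
      show "Measurable.pred ?P (\<lambda>z. s (z x) \<le> s (z y))"
        unfolding pred_def by (rule borel_measurable_le[OF comp[OF s that(1)] comp[OF s that(2)]])
    qed (simp add: pred_def)
    ultimately show "?d -` {d} \<inter> space ?P \<in> sets ?P"
      unfolding preimage using \<open>finite I\<close> by measurable
  qed
qed

section \<open>Conformal Alignment\<close>

locale conformal_alignment = prob_space M
  for M :: "'w measure" and MX :: "'x measure" and ME :: "'e measure"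
    and f :: "'x \<Rightarrow> 'y" and Align :: "'y \<Rightarrow> 'e \<Rightarrow> real" and c :: real and g :: "'x \<Rightarrow> real"
    and Dcal :: "nat set" and n m :: nat and Z :: "nat \<Rightarrow> 'w \<Rightarrow> 'x \<times> 'e" and \<alpha> :: real +
  assumes Align_meas: "(\<lambda>z. Align (f (fst z)) (snd z)) \<in> borel_measurable (MX \<Otimes>\<^sub>M ME)"
    and g_meas: "g \<in> borel_measurable MX"
    and Dcal_fin: "finite Dcal"
    and Dcal_disj: "Dcal \<inter> {n+1..n+m} = {}"
    and Z_meas: "\<And>i. i \<in> Dcal \<union> {n+1..n+m} \<Longrightarrow> Z i \<in> measurable M (MX \<Otimes>\<^sub>M ME)"
    and exch: "\<And>j \<pi>. j \<in> {1..m} \<Longrightarrow> \<pi> permutes (Dcal \<union> {n+j}) \<Longrightarrow>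
        distr M (PiM (Dcal \<union> {n+1..n+m}) (\<lambda>_. MX \<Otimes>\<^sub>M ME))
             (\<lambda>\<omega>. \<lambda>i\<in>Dcal \<union> {n+1..n+m}. Z (\<pi> i) \<omega>)
      = distr M (PiM (Dcal \<union> {n+1..n+m}) (\<lambda>_. MX \<Otimes>\<^sub>M ME))
             (\<lambda>\<omega>. \<lambda>i\<in>Dcal \<union> {n+1..n+m}. Z i \<omega>)"
    and no_ties: "AE \<omega> in M. inj_on (\<lambda>i. g (fst (Z i \<omega>))) (Dcal \<union> {n+1..n+m})"
    and alpha_nonneg: "0 \<le> \<alpha>"
begin

abbreviation units :: "nat set" where
  "units \<equiv> Dcal \<union> {n+1..n+m}"

definition sample :: "(nat \<Rightarrow> nat) \<Rightarrow> 'w \<Rightarrow> nat \<Rightarrow> 'x \<times> 'e" where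
  "sample \<pi> \<omega> = (\<lambda>i\<in>units. Z (\<pi> i) \<omega>)"

definition summary_of :: "(nat \<Rightarrow> 'x \<times> 'e) \<Rightarrow> summary" where
  "summary_of z = ({i \<in> units. Align (f (fst (z i))) (snd (z i)) \<le> c},
                   score_order units (\<lambda>i. g (fst (z i))))"

lemma summary_of_sample:
  assumes "\<And>i. i \<in> units \<Longrightarrow> \<pi> i \<in> units"
  shows "summary_of (sample \<pi> \<omega>)
       = ({i \<in> units. \<pi> i \<in> {k \<in> units. Align (f (fst (Z k \<omega>))) (snd (Z k \<omega>)) \<le> c}},
          score_order units ((\<lambda>i. g (fst (Z i \<omega>))) \<circ> \<pi>))"
proof -
  have "{i \<in> units. Align (f (fst (sample \<pi> \<omega> i))) (snd (sample \<pi> \<omega> i)) \<le> c}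
      = {i \<in> units. \<pi> i \<in> {k \<in> units. Align (f (fst (Z k \<omega>))) (snd (Z k \<omega>)) \<le> c}}"
    using assms unfolding sample_def by auto
  moreover have "score_order units (\<lambda>i. g (fst (sample \<pi> \<omega> i)))
      = score_order units ((\<lambda>i. g (fst (Z i \<omega>))) \<circ> \<pi>)"
    unfolding score_order_def sample_def by auto
  ultimately show ?thesis unfolding summary_of_def by simp
qed

lemma measurable_sample:
  assumes "\<And>i. i \<in> units \<Longrightarrow> \<pi> i \<in> units"
  shows "sample \<pi> \<in> measurable M (PiM units (\<lambda>_. MX \<Otimes>\<^sub>M ME))"
  unfolding sample_def using assms Z_meas by (intro measurable_restrict) auto

lemma measurable_summary_of:
  "(\<lambda>z. h (summary_of z)) \<in> borel_measurable (PiM units (\<lambda>_. MX \<Otimes>\<^sub>M ME))"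
  unfolding summary_of_def
  by (rule measurable_compose[OF measurable_summary borel_measurable_count_space])
     (use Align_meas g_meas Dcal_fin in auto)

lemma integrable_fdp_term_sample:
  assumes "\<And>i. i \<in> units \<Longrightarrow> \<pi> i \<in> units"
  shows "integrable M (\<lambda>\<omega>. fdp_term \<alpha> Dcal n m (summary_of (sample \<pi> \<omega>)) j)"
proof (rule integrable_const_bound[where B = 1])
  show "(\<lambda>\<omega>. fdp_term \<alpha> Dcal n m (summary_of (sample \<pi> \<omega>)) j) \<in> borel_measurable M"
    using measurable_compose[OF measurable_sample[OF assms] measurable_summary_of] .
qed (simp add: fdp_term_abs_le_1)

lemma transpose_in_units:
  assumes "j \<in> {1..m}" "u \<in> Dcal \<union> {n + j}" "i \<in> units"
  shows "Transposition.transpose (n + j) u i \<in> units"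
  using assms by (auto simp: Transposition.transpose_def)

lemma fdp_eq_sum_fdp_term:
  "(let A = (\<lambda>i. Align (f (fst (Z i \<omega>))) (snd (Z i \<omega>)));
        Ahat = (\<lambda>i. g (fst (Z i \<omega>)));
        S = CA_sel \<alpha> Dcal n m c A Ahat
    in real (card {j \<in> {1..m}. A (n + j) \<le> c \<and> j \<in> S}) / real (max (card S) 1))
   = (\<Sum>j\<in>{1..m}. fdp_term \<alpha> Dcal n m (summary_of (sample id \<omega>)) j)"
proof -
  define A where "A = (\<lambda>i. Align (f (fst (Z i \<omega>))) (snd (Z i \<omega>)))"
  define Ahat where "Ahat = (\<lambda>i. g (fst (Z i \<omega>)))"
  define Nset where "Nset = {k \<in> units. A k \<le> c}"
  define S where "S = CA_sel \<alpha> Dcal n m c A Ahat"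
  have d: "summary_of (sample id \<omega>) = (Nset, score_order units Ahat)"
    using summary_of_sample[of id \<omega>] unfolding Nset_def A_def Ahat_def by simp
  have "conf_pval Dcal n c A Ahat j = summary_pval Dcal n (Nset, score_order units Ahat) j"
    if "j \<in> {1..m}" for j
  proof -
    have "{i \<in> Dcal. A i \<le> c \<and> Ahat (n + j) \<le> Ahat i} = {i \<in> Dcal. i \<in> Nset \<and> Ahat (n + j) \<le> Ahat i}"
      unfolding Nset_def by auto
    then show ?thesis
      unfolding conf_pval_def summary_pval_score_order[OF Dcal_fin Dcal_disj order_refl that] by simp
  qed
  then have S: "S = BH_set \<alpha> m (summary_pval Dcal n (Nset, score_order units Ahat))"
    unfolding S_def CA_sel_def by (rule BH_set_cong)
  have null: "n + j \<in> Nset \<longleftrightarrow> A (n + j) \<le> c" if "j \<in> {1..m}" for j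
    using that unfolding Nset_def by auto
  have "(\<Sum>j\<in>{1..m}. fdp_term \<alpha> Dcal n m (summary_of (sample id \<omega>)) j)
      = (\<Sum>j\<in>{1..m}. of_bool (A (n + j) \<le> c \<and> j \<in> S)) / real (max (card S) 1)"
    unfolding d fdp_term_def Let_def S[symmetric] sum_divide_distrib fst_conv
    by (intro sum.cong) (auto simp: null)
  also have "\<dots> = real (card {j \<in> {1..m}. A (n + j) \<le> c \<and> j \<in> S}) / real (max (card S) 1)"
    by (simp add: Int_def)
  finally show ?thesis unfolding A_def Ahat_def S_def Let_def by simp
qed

lemma expectation_fdp_term_transpose:
  assumes j: "j \<in> {1..m}" and u: "u \<in> Dcal \<union> {n + j}"
  shows "expectation (\<lambda>\<omega>. fdp_term \<alpha> Dcal n m (summary_of (sample (Transposition.transpose (n + j) u) \<omega>)) j)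
       = expectation (\<lambda>\<omega>. fdp_term \<alpha> Dcal n m (summary_of (sample id \<omega>)) j)"
proof -
  let ?P = "PiM units (\<lambda>_. MX \<Otimes>\<^sub>M ME)"
  let ?\<sigma> = "Transposition.transpose (n + j) u"
  let ?F = "\<lambda>z. fdp_term \<alpha> Dcal n m (summary_of z) j"
  have "?\<sigma> permutes Dcal \<union> {n + j}" using u by (intro permutes_swap_id) auto
  then have law: "distr M ?P (sample ?\<sigma>) = distr M ?P (sample id)"
    unfolding sample_def using exch[OF j] by simp
  have "expectation (\<lambda>\<omega>. ?F (sample ?\<sigma> \<omega>)) = integral\<^sup>L (distr M ?P (sample ?\<sigma>)) ?F"
    using measurable_sample transpose_in_units[OF j u] measurable_summary_of
    by (intro integral_distr[symmetric]) auto
  also have "\<dots> = integral\<^sup>L M (\<lambda>\<omega>. ?F (sample id \<omega>))"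
    unfolding law using measurable_sample[of id] measurable_summary_of by (intro integral_distr) auto
  finally show ?thesis .
qed

lemma sum_fdp_term_transpose_le:
  assumes j: "j \<in> {1..m}" and no_tie: "inj_on (\<lambda>i. g (fst (Z i \<omega>))) units"
  shows "(\<Sum>u\<in>Dcal \<union> {n + j}.
            fdp_term \<alpha> Dcal n m (summary_of (sample (Transposition.transpose (n + j) u) \<omega>)) j)
         \<le> \<alpha> * (real (card Dcal) + 1) / real m"
proof -
  let ?Nset = "{k \<in> units. Align (f (fst (Z k \<omega>))) (snd (Z k \<omega>)) \<le> c}"
  let ?V = "\<lambda>i. g (fst (Z i \<omega>))"
  let ?\<sigma> = "\<lambda>u. Transposition.transpose (n + j) u"
  have "(\<Sum>u\<in>Dcal \<union> {n + j}. fdp_term \<alpha> Dcal n m (summary_of (sample (?\<sigma> u) \<omega>)) j)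
      \<le> (\<Sum>u\<in>Dcal \<union> {n + j}.
            fdp_bound \<alpha> Dcal n m ({i \<in> units. ?\<sigma> u i \<in> ?Nset}, score_order units (?V \<circ> ?\<sigma> u)) j)"
  proof (rule sum_mono)
    fix u assume u: "u \<in> Dcal \<union> {n + j}"
    have "summary_of (sample (?\<sigma> u) \<omega>)
        = ({i \<in> units. ?\<sigma> u i \<in> ?Nset}, score_order units (?V \<circ> ?\<sigma> u))"
      by (rule summary_of_sample) (rule transpose_in_units[OF j u])
    then show "fdp_term \<alpha> Dcal n m (summary_of (sample (?\<sigma> u) \<omega>)) j
        \<le> fdp_bound \<alpha> Dcal n m ({i \<in> units. ?\<sigma> u i \<in> ?Nset}, score_order units (?V \<circ> ?\<sigma> u)) j"
      by (simp only:) (rule fdp_term_le_fdp_bound[OF Dcal_fin Dcal_disj order_refl alpha_nonneg j])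
  qed
  also have "\<dots> \<le> \<alpha> * (real (card Dcal) + 1) / real m"
    using j by (intro sum_fdp_bound_transpose_le[OF Dcal_fin Dcal_disj order_refl alpha_nonneg j]
                      inj_on_subset[OF no_tie]) auto
  finally show ?thesis .
qed

lemma expectation_fdp_term_le:
  assumes j: "j \<in> {1..m}"
  shows "expectation (\<lambda>\<omega>. fdp_term \<alpha> Dcal n m (summary_of (sample id \<omega>)) j) \<le> \<alpha> / real m"
proof -
  let ?U = "Dcal \<union> {n + j}"
  let ?F = "\<lambda>\<pi> \<omega>. fdp_term \<alpha> Dcal n m (summary_of (sample \<pi> \<omega>)) j"
  let ?\<sigma> = "\<lambda>u. Transposition.transpose (n + j) u"
  define N where "N = real (card Dcal) + 1"
  have "N > 0" unfolding N_def by simp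
  have "n + j \<notin> Dcal" using j Dcal_disj by auto
  then have "real (card ?U) = N" unfolding N_def using Dcal_fin by simp
  then have "N * expectation (?F id) = (\<Sum>u\<in>?U. expectation (?F (?\<sigma> u)))"
    using expectation_fdp_term_transpose[OF j] by simp
  also have "\<dots> = expectation (\<lambda>\<omega>. \<Sum>u\<in>?U. ?F (?\<sigma> u) \<omega>)"
    using integrable_fdp_term_sample transpose_in_units[OF j] by (intro Bochner_Integration.integral_sum[symmetric]) blast
  also have "\<dots> \<le> expectation (\<lambda>_. \<alpha> * N / real m)"
  proof (rule integral_mono_AE)
    show "integrable M (\<lambda>\<omega>. \<Sum>u\<in>?U. ?F (?\<sigma> u) \<omega>)"
      using integrable_fdp_term_sample transpose_in_units[OF j] by (intro Bochner_Integration.integrable_sum) blast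
    show "AE \<omega> in M. (\<Sum>u\<in>?U. ?F (?\<sigma> u) \<omega>) \<le> \<alpha> * N / real m"
      using no_ties by eventually_elim (use sum_fdp_term_transpose_le[OF j] in \<open>simp add: N_def\<close>)
  qed simp
  also have "\<dots> = N * (\<alpha> / real m)" by (simp add: prob_space)
  finally show ?thesis using \<open>N > 0\<close> by (simp only: mult_le_cancel_left_pos)
qed

theorem fdr_le:
  "expectation (\<lambda>\<omega>.
      (let A = (\<lambda>i. Align (f (fst (Z i \<omega>))) (snd (Z i \<omega>)));
           Ahat = (\<lambda>i. g (fst (Z i \<omega>)));
           S = CA_sel \<alpha> Dcal n m c A Ahat
       in real (card {j \<in> {1..m}. A (n + j) \<le> c \<and> j \<in> S}) / real (max (card S) 1)))
    \<le> \<alpha>"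
proof -
  let ?F = "\<lambda>j \<omega>. fdp_term \<alpha> Dcal n m (summary_of (sample id \<omega>)) j"
  have "expectation (\<lambda>\<omega>.
      (let A = (\<lambda>i. Align (f (fst (Z i \<omega>))) (snd (Z i \<omega>)));
           Ahat = (\<lambda>i. g (fst (Z i \<omega>)));
           S = CA_sel \<alpha> Dcal n m c A Ahat
       in real (card {j \<in> {1..m}. A (n + j) \<le> c \<and> j \<in> S}) / real (max (card S) 1)))
      = expectation (\<lambda>\<omega>. \<Sum>j\<in>{1..m}. ?F j \<omega>)"
    by (simp only: fdp_eq_sum_fdp_term)
  also have "\<dots> = (\<Sum>j\<in>{1..m}. expectation (?F j))"
    by (intro Bochner_Integration.integral_sum integrable_fdp_term_sample) simp
  also have "\<dots> \<le> (\<Sum>j\<in>{1..m}. \<alpha> / real m)"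
    by (intro sum_mono expectation_fdp_term_le)
  also have "\<dots> \<le> \<alpha>" using alpha_nonneg by (cases "m = 0") auto
  finally show ?thesis .
qed

end

theorem theorem1:
  fixes M :: "'w measure"
    and MX :: "'x measure" and ME :: "'e measure"
    and f :: "'x \<Rightarrow> 'y" and Align :: "'y \<Rightarrow> 'e \<Rightarrow> real"
    and c :: real and g :: "'x \<Rightarrow> real" and Mbar :: real
    and Dcal :: "nat set" and n m :: nat
    and Z :: "nat \<Rightarrow> 'w \<Rightarrow> 'x \<times> 'e"
    and \<alpha> :: real
  assumes prob: "prob_space M"
    and Align_meas: "(\<lambda>z. Align (f (fst z)) (snd z)) \<in> borel_measurable (MX \<Otimes>\<^sub>M ME)"
    and g_meas: "g \<in> borel_measurable MX"
    and Mbar_pos: "Mbar > 0"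
    and g_bdd: "\<And>x. \<bar>g x\<bar> \<le> Mbar"
    and Dcal_fin: "finite Dcal"
    and Dcal_disj: "Dcal \<inter> {n+1..n+m} = {}"
    and Z_meas: "\<And>i. i \<in> Dcal \<union> {n+1..n+m} \<Longrightarrow> Z i \<in> measurable M (MX \<Otimes>\<^sub>M ME)"
    and exch: "\<And>j \<pi>. j \<in> {1..m} \<Longrightarrow> \<pi> permutes (Dcal \<union> {n+j}) \<Longrightarrow>
        distr M (PiM (Dcal \<union> {n+1..n+m}) (\<lambda>_. MX \<Otimes>\<^sub>M ME))
             (\<lambda>\<omega>. \<lambda>i\<in>Dcal \<union> {n+1..n+m}. Z (\<pi> i) \<omega>)
      = distr M (PiM (Dcal \<union> {n+1..n+m}) (\<lambda>_. MX \<Otimes>\<^sub>M ME))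
             (\<lambda>\<omega>. \<lambda>i\<in>Dcal \<union> {n+1..n+m}. Z i \<omega>)"
    and no_ties: "AE \<omega> in M. inj_on (\<lambda>i. g (fst (Z i \<omega>))) (Dcal \<union> {n+1..n+m})"
    and alpha: "0 < \<alpha>" "\<alpha> < 1"
  shows "prob_space.expectation M (\<lambda>\<omega>.
      (let A = (\<lambda>i. Align (f (fst (Z i \<omega>))) (snd (Z i \<omega>)));
           Ahat = (\<lambda>i. g (fst (Z i \<omega>)));
           S = CA_sel \<alpha> Dcal n m c A Ahat
       in real (card {j \<in> {1..m}. A (n + j) \<le> c \<and> j \<in> S}) / real (max (card S) 1)))
    \<le> \<alpha>"
proof -
  interpret conformal_alignment M MX ME f Align c g Dcal n m Z \<alpha>
    using prob Align_meas g_meas Dcal_fin Dcal_disj Z_meas exch no_ties alpha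
    by (intro conformal_alignment.intro conformal_alignment_axioms.intro) auto
  show ?thesis by (rule fdr_le)
qed

end
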